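(* Let $\mathcal{G}$ be a finite group acting on $V=\mathbb{R}^n$ by permutation matrices $\pi\mapsto M_\pi$, and let $V=W^1\oplus\cdots\oplus W^R$ be the isotypic decomposition of this representation. Let $G$ be a random real symmetric $n\times n$ matrix drawn from the Gaussian Orthogonal Ensemble and let $\Lambda=\frac{1}{|\mathcal{G}|}\sum_{\pi\in\mathcal{G}}M_\pi G M_\pi^{\top}$. Then, almost surely, every eigenspace of $\Lambda$ is contained in a single isotypic component $W^r$.
   Context: The isotypic decomposition of a real representation $V$ of a finite group is the unique decomposition $V=W^1\oplus\cdots\oplus W^R$ where each $W^r$ is the sum of all subrepresentations of $V$ isomorphic to a fixed irreducible representation, distinct $r$ corresponding to inequivalent irreducible representations. The Gaussian Orthogonal Ensemble is the distribution of real symmetric matrices whose entries on and above the diagonal are independent normally distributed random variables. The map $G\mapsto\Lambda$ is the Reynolds operator (group averaging), so $\Lambda$ is symmetric and satisfies $M_\pi^\top\Lambda M_\pi=\Lambda$ for all $\pi\in\mathcal{G}$. *)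

theory Defs
  imports "HOL-Probability.Probability" "HOL-Algebra.Group_Action"
begin

text \<open>Permutation matrix of a permutation p of the index type: column j is the
  standard basis vector e_(p j), so that perm_matrix (p o q) = perm_matrix p ** perm_matrix q.\<close>
definition perm_matrix :: "('n::finite \<Rightarrow> 'n) \<Rightarrow> real^'n^'n" where
  "perm_matrix p = (\<chi> i j. if i = p j then 1 else 0)"

text \<open>The Gaussian Orthogonal Ensemble on real symmetric n x n matrices:
  G = (X + X^T)/sqrt 2 with X having i.i.d. standard normal entries; the entries of G
  on and above the diagonal are independent normal (off-diagonal variance 1,
  diagonal variance 2).\<close>
definition GOE :: "(real^'n::finite^'n) measure" where
  "GOE = distr (PiM (UNIV :: ('n \<times> 'n) set) (\<lambda>_. density lborel std_normal_density))
               borel (\<lambda>X. \<chi> i j. (X (i, j) + X (j, i)) / sqrt 2)"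

definition reynolds :: "('g, 'b) monoid_scheme \<Rightarrow> ('g \<Rightarrow> 'n::finite \<Rightarrow> 'n) \<Rightarrow> real^'n^'n \<Rightarrow> real^'n^'n" where
  "reynolds G \<phi> A = (1 / real (card (carrier G))) *\<^sub>R
     (\<Sum>g\<in>carrier G. perm_matrix (\<phi> g) ** A ** transpose (perm_matrix (\<phi> g)))"

definition subrep :: "('g, 'b) monoid_scheme \<Rightarrow> ('g \<Rightarrow> 'n::finite \<Rightarrow> 'n) \<Rightarrow> (real^'n) set \<Rightarrow> bool" where
  "subrep G \<phi> W \<longleftrightarrow> subspace W \<and> (\<forall>g\<in>carrier G. \<forall>x\<in>W. perm_matrix (\<phi> g) *v x \<in> W)"

definition irreducible_subrep :: "('g, 'b) monoid_scheme \<Rightarrow> ('g \<Rightarrow> 'n::finite \<Rightarrow> 'n) \<Rightarrow> (real^'n) set \<Rightarrow> bool" where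
  "irreducible_subrep G \<phi> W \<longleftrightarrow> subrep G \<phi> W \<and> W \<noteq> {0} \<and>
     (\<forall>W'. subrep G \<phi> W' \<and> W' \<subseteq> W \<longrightarrow> W' = {0} \<or> W' = W)"

definition iso_subrep :: "('g, 'b) monoid_scheme \<Rightarrow> ('g \<Rightarrow> 'n::finite \<Rightarrow> 'n) \<Rightarrow> (real^'n) set \<Rightarrow> (real^'n) set \<Rightarrow> bool" where
  "iso_subrep G \<phi> W W' \<longleftrightarrow> (\<exists>f. linear f \<and> bij_betw f W W' \<and>
     (\<forall>g\<in>carrier G. \<forall>x\<in>W. f (perm_matrix (\<phi> g) *v x) = perm_matrix (\<phi> g) *v f x))"

definition isotypic_component :: "('g, 'b) monoid_scheme \<Rightarrow> ('g \<Rightarrow> 'n::finite \<Rightarrow> 'n) \<Rightarrow> (real^'n) set \<Rightarrow> (real^'n) set" where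
  "isotypic_component G \<phi> U = span (\<Union>{W. subrep G \<phi> W \<and> iso_subrep G \<phi> W U})"

definition mat_eigenspace :: "real^'n::finite^'n \<Rightarrow> real \<Rightarrow> (real^'n) set" where
  "mat_eigenspace A c = {v. A *v v = c *\<^sub>R v}"

end

theory Submission
  imports Defs
begin

text \<open>The Reynolds average \<open>\<Lambda>\<close> of a symmetric matrix is symmetric and commutes with the
  orthogonal permutation action, so by Schur's lemma it leaves every isotypic component invariant;
  distinct isotypic components are orthogonal. An eigenspace of \<open>\<Lambda>\<close> is a subrepresentation, so
  it contains an irreducible one and meets some isotypic component \<open>C\<close>; if it is not contained
  in \<open>C\<close>, its part orthogonal to \<open>C\<close> is a nonzero subrepresentation, which meets another
  isotypic component, and \<open>\<Lambda>\<close> has a common eigenvalue on two distinct isotypic components.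

  This is a null event. For distinct components \<open>C\<^sub>1, C\<^sub>2\<close> let \<open>D\<close> be the orthogonal
  projection onto \<open>C\<^sub>1\<close>; it is symmetric and equivariant, so moving the sample \<open>A\<close> to
  \<open>A + t D\<close> moves \<open>\<Lambda>\<close> to \<open>\<Lambda> + t D\<close>, which shifts the eigenvalues on \<open>C\<^sub>1\<close> by \<open>t\<close> and
  keeps those on \<open>C\<^sub>2\<close>. So every line in direction \<open>D\<close> meets the bad set in finitely many
  points, the bad set is Lebesgue-null by Fubini, hence null for the Gaussian density, and there
  are only finitely many pairs of components.\<close>

section \<open>Linear algebra\<close>

lemma matrix_add_rdistrib: "(A + B) ** C = A ** C + B ** (C :: 'a::semiring_1^_^_)"
  by (vector matrix_matrix_mult_def sum.distrib[symmetric] distrib_right)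

lemma linear_transpose: "linear (transpose :: real^'n^'m \<Rightarrow> real^'m^'n)"
  by (rule linearI) (simp_all add: transpose_def vec_eq_iff)

lemma matrix_vector_mult_sum: "(\<Sum>g\<in>S. M g) *v x = (\<Sum>g\<in>S. M g *v x)"
  by (induction S rule: infinite_finite_induct) (auto simp: matrix_vector_mult_add_rdistrib)

definition orthogonal_projection :: "'a::euclidean_space set \<Rightarrow> 'a \<Rightarrow> 'a" where
  "orthogonal_projection W x = (THE y. y \<in> W \<and> x - y \<in> W\<^sup>\<bottom>)"

lemma orthogonal_projection_eqI:
  assumes W: "subspace W" and "y \<in> W" and "x - y \<in> W\<^sup>\<bottom>"
  shows "orthogonal_projection W x = y"
  unfolding orthogonal_projection_def
proof (rule the_equality)
  fix y' assume y': "y' \<in> W \<and> x - y' \<in> W\<^sup>\<bottom>"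
  have "y' - y \<in> W"
    using W y' \<open>y \<in> W\<close> by (simp add: subspace_diff)
  moreover have "(x - y) - (x - y') \<in> W\<^sup>\<bottom>"
    using y' \<open>x - y \<in> W\<^sup>\<bottom>\<close> by (blast intro: subspace_diff subspace_orthogonal_comp)
  then have "y' - y \<in> W\<^sup>\<bottom>" by simp
  ultimately have "y' - y \<in> W \<inter> W\<^sup>\<bottom>" by blast
  then show "y' = y"
    unfolding orthogonal_Int_0[OF W] by simp
qed (use assms in auto)

lemma orthogonal_projection:
  assumes W: "subspace W"
  shows "orthogonal_projection W x \<in> W" and "x - orthogonal_projection W x \<in> W\<^sup>\<bottom>"
proof -
  obtain y z where "y \<in> W" "z \<in> W\<^sup>\<bottom>" "x = y + z"
    using subspace_sum_orthogonal_comp[OF W] by (metis UNIV_I set_plus_elim)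
  then have "orthogonal_projection W x = y"
    by (intro orthogonal_projection_eqI[OF W]) auto
  with \<open>y \<in> W\<close> \<open>z \<in> W\<^sup>\<bottom>\<close> \<open>x = y + z\<close>
  show "orthogonal_projection W x \<in> W" and "x - orthogonal_projection W x \<in> W\<^sup>\<bottom>"
    by auto
qed

lemma orthogonal_projection_id: "subspace W \<Longrightarrow> x \<in> W \<Longrightarrow> orthogonal_projection W x = x"
  by (rule orthogonal_projection_eqI) (auto simp: subspace_0 subspace_orthogonal_comp)

lemma orthogonal_projection_zero: "subspace W \<Longrightarrow> x \<in> W\<^sup>\<bottom> \<Longrightarrow> orthogonal_projection W x = 0"
  by (rule orthogonal_projection_eqI) (auto simp: subspace_0)

lemma linear_orthogonal_projection:
  assumes W: "subspace W"
  shows "linear (orthogonal_projection W)"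
proof (rule linearI)
  note p = orthogonal_projection[OF W]
  show "orthogonal_projection W (x + y) = orthogonal_projection W x + orthogonal_projection W y" for x y
  proof (rule orthogonal_projection_eqI[OF W])
    show "orthogonal_projection W x + orthogonal_projection W y \<in> W"
      using p W by (simp add: subspace_add)
    have "x + y - (orthogonal_projection W x + orthogonal_projection W y) =
          (x - orthogonal_projection W x) + (y - orthogonal_projection W y)" by simp
    then show "x + y - (orthogonal_projection W x + orthogonal_projection W y) \<in> W\<^sup>\<bottom>"
      using p by (metis subspace_add subspace_orthogonal_comp)
  qed
  show "orthogonal_projection W (c *\<^sub>R x) = c *\<^sub>R orthogonal_projection W x" for c x
  proof (rule orthogonal_projection_eqI[OF W])
    show "c *\<^sub>R orthogonal_projection W x \<in> W"
      using p W by (simp add: subspace_scale)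
    have "c *\<^sub>R x - c *\<^sub>R orthogonal_projection W x = c *\<^sub>R (x - orthogonal_projection W x)"
      by (simp add: scaleR_diff_right)
    then show "c *\<^sub>R x - c *\<^sub>R orthogonal_projection W x \<in> W\<^sup>\<bottom>"
      using p by (metis subspace_scale subspace_orthogonal_comp)
  qed
qed

lemma orthogonal_projection_self_adjoint:
  assumes W: "subspace W"
  shows "orthogonal_projection W x \<bullet> y = x \<bullet> orthogonal_projection W y"
proof -
  note p = orthogonal_projection[OF W]
  have "orthogonal_projection W x \<bullet> (y - orthogonal_projection W y) = 0"
       "(x - orthogonal_projection W x) \<bullet> orthogonal_projection W y = 0"
    using p by (auto simp: orthogonal_comp_def orthogonal_def inner_commute)
  then show ?thesis
    by (simp add: inner_diff_left inner_diff_right)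
qed

lemma symmetric_matrix_orthogonal_projection:
  fixes W :: "(real^'n) set"
  assumes "subspace W"
  shows "transpose (matrix (orthogonal_projection W)) = matrix (orthogonal_projection W)"
  using matrix_adjoint[OF linear_orthogonal_projection[OF assms]]
    adjoint_unique[of "orthogonal_projection W"] orthogonal_projection_self_adjoint[OF assms]
  by metis

lemma orthogonal_projection_commute:
  assumes W: "subspace W" and T: "linear T"
    and TW: "\<And>x. x \<in> W \<Longrightarrow> T x \<in> W" and TW': "\<And>x. x \<in> W\<^sup>\<bottom> \<Longrightarrow> T x \<in> W\<^sup>\<bottom>"
  shows "orthogonal_projection W (T x) = T (orthogonal_projection W x)"
proof (rule orthogonal_projection_eqI[OF W])
  note p = orthogonal_projection[OF W]
  show "T (orthogonal_projection W x) \<in> W" using p TW by blast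
  show "T x - T (orthogonal_projection W x) \<in> W\<^sup>\<bottom>"
    using TW' p by (metis linear_diff[OF T])
qed

lemma finite_orthogonal_family:
  fixes V :: "'i \<Rightarrow> 'a::euclidean_space set"
  assumes nonzero: "\<And>i. i \<in> I \<Longrightarrow> \<exists>x\<in>V i. x \<noteq> 0"
    and orth: "\<And>i j x y. i \<in> I \<Longrightarrow> j \<in> I \<Longrightarrow> i \<noteq> j \<Longrightarrow> x \<in> V i \<Longrightarrow> y \<in> V j \<Longrightarrow> orthogonal x y"
  shows "finite I"
proof -
  obtain e where e: "\<And>i. i \<in> I \<Longrightarrow> e i \<in> V i \<and> e i \<noteq> 0"
    using nonzero by metis
  have "inj_on e I"
    by (rule inj_onI) (metis e orth orthogonal_self)
  moreover have "pairwise orthogonal (e ` I)"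
    unfolding pairwise_def using e orth by blast
  then have "independent (e ` I)"
    using e by (intro pairwise_orthogonal_independent) auto
  ultimately show ?thesis
    using finiteI_independent finite_imageD by blast
qed

lemma inner_symmetric_matrix:
  fixes L :: "real^'n^'n"
  assumes "transpose L = L"
  shows "(L *v x) \<bullet> y = x \<bullet> (L *v y)"
  by (metis assms dot_lmul_matrix inner_commute transpose_matrix_vector)

lemma finite_eigenvalues_symmetric:
  fixes L :: "real^'n^'n"
  assumes "transpose L = L"
  shows "finite {c. \<exists>v. v \<noteq> 0 \<and> L *v v = c *\<^sub>R v}"
proof (rule finite_orthogonal_family[where V = "mat_eigenspace L"])
  fix c d x y assume "c \<noteq> d" and x: "x \<in> mat_eigenspace L c" and y: "y \<in> mat_eigenspace L d"
  have "c * (x \<bullet> y) = d * (x \<bullet> y)"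
    using inner_symmetric_matrix[OF assms, of x y] x y by (simp add: mat_eigenspace_def)
  then show "orthogonal x y"
    using \<open>c \<noteq> d\<close> by (simp add: orthogonal_def)
qed (auto simp: mat_eigenspace_def)

lemma symmetric_matrix_orthogonal_comp:
  fixes L :: "real^'n^'n"
  assumes sym: "transpose L = L" and W: "\<And>w. w \<in> W \<Longrightarrow> L *v w \<in> W" and x: "x \<in> W\<^sup>\<bottom>"
  shows "L *v x \<in> W\<^sup>\<bottom>"
proof -
  have "w \<bullet> (L *v x) = 0" if "w \<in> W" for w
  proof -
    have "(L *v w) \<bullet> x = 0"
      using W[OF that] x by (simp add: orthogonal_comp_def orthogonal_def)
    then show ?thesis
      by (simp add: inner_symmetric_matrix[OF sym])
  qed
  then show ?thesis
    by (simp add: orthogonal_comp_def orthogonal_def)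
qed

lemma eigenspace_subset_invariant_subspace:
  fixes L :: "real^'n^'n"
  assumes sym: "transpose L = L" and C: "subspace C" and LC: "\<And>x. x \<in> C \<Longrightarrow> L *v x \<in> C"
    and trivial: "mat_eigenspace L c \<inter> C\<^sup>\<bottom> = {0}"
  shows "mat_eigenspace L c \<subseteq> C"
proof
  fix x assume x: "x \<in> mat_eigenspace L c"
  define y where "y = orthogonal_projection C x"
  define z where "z = x - y"
  have y: "y \<in> C" and z: "z \<in> C\<^sup>\<bottom>"
    using orthogonal_projection[OF C] by (auto simp: y_def z_def)
  have "L *v z - c *\<^sub>R z = c *\<^sub>R y - L *v y"
    using x by (simp add: mat_eigenspace_def z_def algebra_simps)
  moreover have "L *v z - c *\<^sub>R z \<in> C\<^sup>\<bottom>"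
    using symmetric_matrix_orthogonal_comp[OF sym LC z] z
    by (simp add: subspace_diff subspace_scale subspace_orthogonal_comp)
  moreover have "c *\<^sub>R y - L *v y \<in> C"
    using y LC C by (simp add: subspace_diff subspace_scale)
  ultimately have "L *v z - c *\<^sub>R z \<in> C \<inter> C\<^sup>\<bottom>"
    by simp
  then have "z \<in> mat_eigenspace L c \<inter> C\<^sup>\<bottom>"
    using z orthogonal_Int_0[OF C] by (simp add: mat_eigenspace_def)
  then show "x \<in> C"
    using trivial y by (simp add: z_def)
qed

definition shares_eigenvalue :: "real^'n::finite^'n \<Rightarrow> (real^'n) set \<Rightarrow> (real^'n) set \<Rightarrow> bool" where
  "shares_eigenvalue L V W \<longleftrightarrow>
     (\<exists>c v w. v \<in> V \<and> v \<noteq> 0 \<and> w \<in> W \<and> w \<noteq> 0 \<and> L *v v = c *\<^sub>R v \<and> L *v w = c *\<^sub>R w)"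

text \<open>Adding \<open>t D\<close> shifts the eigenvalues on \<open>V\<close> by \<open>t\<close> and fixes those on \<open>W\<close>, so
  a shared eigenvalue forces \<open>t\<close> to be a difference of two eigenvalues of \<open>L\<close>.\<close>
lemma finite_shares_eigenvalue_line:
  fixes L D :: "real^'n::finite^'n"
  assumes sym: "transpose L = L"
    and DV: "\<And>v. v \<in> V \<Longrightarrow> D *v v = v" and DW: "\<And>w. w \<in> W \<Longrightarrow> D *v w = 0"
  shows "finite {t. shares_eigenvalue (L + t *\<^sub>R D) V W}"
proof -
  define Eig where "Eig = {c. \<exists>v. v \<noteq> 0 \<and> L *v v = c *\<^sub>R v}"
  have "{t. shares_eigenvalue (L + t *\<^sub>R D) V W} \<subseteq> (\<lambda>(a, b). b - a) ` (Eig \<times> Eig)"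
  proof
    fix t assume "t \<in> {t. shares_eigenvalue (L + t *\<^sub>R D) V W}"
    then obtain c v w where v: "v \<in> V" "v \<noteq> 0" "(L + t *\<^sub>R D) *v v = c *\<^sub>R v"
      and w: "w \<in> W" "w \<noteq> 0" "(L + t *\<^sub>R D) *v w = c *\<^sub>R w"
      by (auto simp: shares_eigenvalue_def)
    then have "L *v v = (c - t) *\<^sub>R v" "L *v w = c *\<^sub>R w"
      using DV[OF v(1)] DW[OF w(1)]
      by (simp_all add: matrix_vector_mult_add_rdistrib scaleR_matrix_vector_assoc[symmetric]
          algebra_simps)
    then have "c - t \<in> Eig" "c \<in> Eig"
      using v(2) w(2) by (auto simp: Eig_def)
    then show "t \<in> (\<lambda>(a, b). b - a) ` (Eig \<times> Eig)"
      by (auto intro!: image_eqI[of _ _ "(c - t, c)"])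
  qed
  moreover have "finite Eig"
    unfolding Eig_def by (rule finite_eigenvalues_symmetric[OF sym])
  ultimately show ?thesis
    by (meson finite_SigmaI finite_imageI finite_subset)
qed

section \<open>Permutation representations and the Reynolds operator\<close>

lemma perm_matrix_comp: "perm_matrix (p \<circ> q) = perm_matrix p ** perm_matrix q"
proof -
  have "(\<Sum>k\<in>UNIV. (if i = p k then 1 else 0) * (if k = q j then 1 else 0)) =
        (if i = p (q j) then 1 else (0::real))" for i j
  proof -
    have "(\<Sum>k\<in>UNIV. (if i = p k then 1 else 0) * (if k = q j then 1 else 0)) =
          (\<Sum>k\<in>UNIV. if k = q j then (if i = p (q j) then 1 else 0) else (0::real))"
      by (rule sum.cong) auto
    then show ?thesis by simp
  qed
  then show ?thesis
    by (simp add: perm_matrix_def matrix_matrix_mult_def vec_eq_iff)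
qed

lemma perm_matrix_id: "perm_matrix id = mat 1"
  by (simp add: perm_matrix_def mat_def vec_eq_iff)

lemma orthogonal_matrix_perm_matrix:
  assumes "inj p"
  shows "orthogonal_matrix (perm_matrix p)"
proof -
  have "(\<Sum>k\<in>UNIV. (if k = p i then 1 else 0) * (if k = p j then 1 else 0)) =
        (if i = j then 1 else (0::real))" for i j
  proof -
    have "(\<Sum>k\<in>UNIV. (if k = p i then 1 else 0) * (if k = p j then 1 else 0)) =
          (\<Sum>k\<in>UNIV. if k = p i then (if p i = p j then 1 else 0) else (0::real))"
      by (rule sum.cong) auto
    then show ?thesis
      using assms by (simp add: inj_eq)
  qed
  then have "transpose (perm_matrix p) ** perm_matrix p = mat 1"
    by (simp add: perm_matrix_def matrix_matrix_mult_def vec_eq_iff transpose_def mat_def)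
  then show ?thesis
    unfolding orthogonal_matrix .
qed

lemma reynolds_mult_vector:
  "reynolds G \<phi> A *v x = (1 / real (card (carrier G))) *\<^sub>R
     (\<Sum>g\<in>carrier G. perm_matrix (\<phi> g) *v (A *v (transpose (perm_matrix (\<phi> g)) *v x)))"
  unfolding reynolds_def scaleR_matrix_vector_assoc[symmetric]
  by (simp only: matrix_vector_mult_sum matrix_vector_mul_assoc matrix_mul_assoc)

lemma linear_reynolds: "linear (reynolds G \<phi>)"
proof (rule linearI)
  show "reynolds G \<phi> (A + B) = reynolds G \<phi> A + reynolds G \<phi> B" for A B
    by (simp add: reynolds_def matrix_add_ldistrib matrix_add_rdistrib sum.distrib
        scaleR_add_right)
  show "reynolds G \<phi> (c *\<^sub>R A) = c *\<^sub>R reynolds G \<phi> A" for c A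
    by (simp add: reynolds_def matrix_scalar_ac scalar_matrix_assoc scaleR_sum_right)
qed

lemma symmetric_reynolds:
  assumes "transpose A = A"
  shows "transpose (reynolds G \<phi> A) = reynolds G \<phi> A"
  by (simp add: reynolds_def transpose_scalar linear_sum[OF linear_transpose]
      matrix_transpose_mul assms matrix_mul_assoc)

locale perm_rep = group_action G UNIV \<phi>
  for G :: "('g, 'b) monoid_scheme" (structure) and \<phi> :: "'g \<Rightarrow> 'n::finite \<Rightarrow> 'n"
begin

abbreviation \<rho> :: "'g \<Rightarrow> real^'n^'n" where "\<rho> g \<equiv> perm_matrix (\<phi> g)"

definition equivariant :: "(real^'n \<Rightarrow> real^'n) \<Rightarrow> bool" where
  "equivariant f \<longleftrightarrow> (\<forall>g\<in>carrier G. \<forall>x. f (\<rho> g *v x) = \<rho> g *v f x)"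

lemma group: "group G"
  using group_hom by (simp add: group_hom_def)

lemma \<phi>_mult: "g \<in> carrier G \<Longrightarrow> h \<in> carrier G \<Longrightarrow> \<phi> (g \<otimes> h) = \<phi> g \<circ> \<phi> h"
  using composition_rule by (auto simp: fun_eq_iff)

lemma \<rho>_mult: "g \<in> carrier G \<Longrightarrow> h \<in> carrier G \<Longrightarrow> \<rho> (g \<otimes> h) = \<rho> g ** \<rho> h"
  by (simp add: \<phi>_mult perm_matrix_comp)

lemma \<rho>_one: "\<rho> \<one> = mat 1"
proof -
  have "\<phi> \<one> = id"
    using id_eq_one by (auto simp: fun_eq_iff)
  then show ?thesis by (simp add: perm_matrix_id)
qed

lemma \<rho>_inv_mult:
  assumes "g \<in> carrier G"
  shows "\<rho> (inv g) ** \<rho> g = mat 1" and "\<rho> g ** \<rho> (inv g) = mat 1"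
  using assms group \<rho>_mult[of "inv g" g] \<rho>_mult[of g "inv g"]
  by (simp_all add: \<rho>_one group.l_inv group.r_inv group.inv_closed)

lemma transpose_\<rho>: "g \<in> carrier G \<Longrightarrow> transpose (\<rho> g) = \<rho> (inv g)"
proof -
  assume g: "g \<in> carrier G"
  have "inj (\<phi> g)"
    using bij_prop0[OF g] by (simp add: Bij_def bij_betw_def)
  then have "\<rho> g ** transpose (\<rho> g) = mat 1"
    using orthogonal_matrix_perm_matrix orthogonal_matrix_def by blast
  then have "\<rho> (inv g) = (\<rho> (inv g) ** \<rho> g) ** transpose (\<rho> g)"
    by (simp flip: matrix_mul_assoc)
  then show ?thesis
    using \<rho>_inv_mult(1)[OF g] by simp
qed

lemma \<rho>_inv_cancel:
  assumes "g \<in> carrier G"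
  shows "\<rho> (inv g) *v (\<rho> g *v x) = x" and "\<rho> g *v (\<rho> (inv g) *v x) = x"
  using \<rho>_inv_mult[OF assms] by (simp_all add: matrix_vector_mul_assoc)

lemma inner_\<rho>: "g \<in> carrier G \<Longrightarrow> (\<rho> g *v x) \<bullet> y = x \<bullet> (\<rho> (inv g) *v y)"
  by (metis dot_lmul_matrix inner_commute transpose_\<rho> transpose_matrix_vector)

lemma equivariant_matrix_iff: "equivariant ((*v) M) \<longleftrightarrow> (\<forall>g\<in>carrier G. M ** \<rho> g = \<rho> g ** M)"
  by (simp add: equivariant_def matrix_eq matrix_vector_mul_assoc)

lemma reynolds_equivariant: "equivariant ((*v) (reynolds G \<phi> A))"
  unfolding equivariant_def
proof (intro ballI allI)
  fix h x assume h: "h \<in> carrier G"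
  interpret group G by (rule group)
  have "(\<Sum>g\<in>carrier G. \<rho> g *v (A *v (\<rho> (inv g) *v (\<rho> h *v x)))) =
        (\<Sum>k\<in>carrier G. \<rho> (h \<otimes> k) *v (A *v (\<rho> (inv (h \<otimes> k)) *v (\<rho> h *v x))))"
    by (rule sum.reindex_bij_witness[of _ "\<lambda>k. h \<otimes> k" "\<lambda>g. inv h \<otimes> g"])
      (use h in \<open>simp_all add: m_assoc[symmetric]\<close>)
  also have "\<dots> = (\<Sum>k\<in>carrier G. \<rho> h *v (\<rho> k *v (A *v (\<rho> (inv k) *v x))))"
  proof (rule sum.cong)
    fix k assume k: "k \<in> carrier G"
    have "\<rho> (inv (h \<otimes> k)) *v (\<rho> h *v x) = \<rho> (inv k) *v x"
      using h k by (simp add: inv_mult_group \<rho>_mult matrix_vector_mul_assoc[symmetric] \<rho>_inv_cancel)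
    then show "\<rho> (h \<otimes> k) *v (A *v (\<rho> (inv (h \<otimes> k)) *v (\<rho> h *v x))) =
               \<rho> h *v (\<rho> k *v (A *v (\<rho> (inv k) *v x)))"
      using h k by (simp add: \<rho>_mult matrix_vector_mul_assoc[symmetric])
  qed simp
  also have "\<dots> = \<rho> h *v (\<Sum>k\<in>carrier G. \<rho> k *v (A *v (\<rho> (inv k) *v x)))"
    by (simp add: linear_sum[OF matrix_vector_mul_linear])
  finally show "reynolds G \<phi> A *v (\<rho> h *v x) = \<rho> h *v (reynolds G \<phi> A *v x)"
    by (simp add: reynolds_mult_vector transpose_\<rho> matrix_scaleR_vector_ac
        scaleR_matrix_vector_assoc)
qed

lemma reynolds_equivariant_id:
  assumes "finite (carrier G)" and M: "equivariant ((*v) M)"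
  shows "reynolds G \<phi> M = M"
proof -
  interpret group G by (rule group)
  have "\<rho> g ** M ** transpose (\<rho> g) = M" if g: "g \<in> carrier G" for g
  proof -
    have "M ** \<rho> (inv g) = \<rho> (inv g) ** M"
      using M g by (simp add: equivariant_matrix_iff)
    then have "\<rho> g ** M ** \<rho> (inv g) = (\<rho> g ** \<rho> (inv g)) ** M"
      by (simp flip: matrix_mul_assoc)
    then show ?thesis
      using g \<rho>_inv_mult(2)[OF g] by (simp add: transpose_\<rho>)
  qed
  then have "(\<Sum>g\<in>carrier G. \<rho> g ** M ** transpose (\<rho> g)) = (\<Sum>g\<in>carrier G. M)"
    by (intro sum.cong) auto
  also have "\<dots> = real (card (carrier G)) *\<^sub>R M"
    by (rule sum_constant_scaleR)
  moreover have "card (carrier G) > 0"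
    using assms(1) by (auto simp: card_gt_0_iff)
  ultimately show ?thesis
    by (simp add: reynolds_def)
qed

section \<open>Isotypic components\<close>

lemma subrep_orthogonal_comp:
  assumes W: "subrep G \<phi> W"
  shows "subrep G \<phi> (W\<^sup>\<bottom>)"
  unfolding subrep_def
proof (intro conjI ballI subspace_orthogonal_comp)
  fix g x assume g: "g \<in> carrier G" and x: "x \<in> W\<^sup>\<bottom>"
  have "w \<bullet> (\<rho> g *v x) = 0" if w: "w \<in> W" for w
  proof -
    have "\<rho> (inv g) *v w \<in> W"
      using W g w group by (simp add: subrep_def group.inv_closed)
    then have "(\<rho> (inv g) *v w) \<bullet> x = 0"
      using x by (simp add: orthogonal_comp_def orthogonal_def)
    then show ?thesis
      using g inner_\<rho>[of g x w] by (simp add: inner_commute)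
  qed
  then show "\<rho> g *v x \<in> W\<^sup>\<bottom>"
    by (simp add: orthogonal_comp_def orthogonal_def)
qed

lemma subrep_Int: "subrep G \<phi> V \<Longrightarrow> subrep G \<phi> W \<Longrightarrow> subrep G \<phi> (V \<inter> W)"
  by (auto simp: subrep_def subspace_inter)

lemma subrep_image:
  assumes W: "subrep G \<phi> W" and f: "linear f"
    and eq: "\<And>g x. g \<in> carrier G \<Longrightarrow> x \<in> W \<Longrightarrow> f (\<rho> g *v x) = \<rho> g *v f x"
  shows "subrep G \<phi> (f ` W)"
  unfolding subrep_def
proof (intro conjI ballI)
  show "subspace (f ` W)"
    using W f by (simp add: subrep_def linear_subspace_image)
  fix g y assume g: "g \<in> carrier G" and "y \<in> f ` W"
  then obtain x where "x \<in> W" "y = f x" by blast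
  then show "\<rho> g *v y \<in> f ` W"
    using W g eq[of g x] by (force simp: subrep_def)
qed

lemma subrep_span_Union:
  assumes "\<And>W. W \<in> \<W> \<Longrightarrow> subrep G \<phi> W"
  shows "subrep G \<phi> (span (\<Union>\<W>))"
  unfolding subrep_def
proof (intro conjI ballI subspace_span)
  fix g x assume g: "g \<in> carrier G" and x: "x \<in> span (\<Union>\<W>)"
  have "(*v) (\<rho> g) ` (\<Union>\<W>) \<subseteq> \<Union>\<W>"
    using assms g by (auto simp: subrep_def)
  then have "span ((*v) (\<rho> g) ` (\<Union>\<W>)) \<subseteq> span (\<Union>\<W>)"
    by (rule span_mono)
  moreover have "\<rho> g *v x \<in> span ((*v) (\<rho> g) ` (\<Union>\<W>))"
    using x by (simp add: linear_span_image[OF matrix_vector_mul_linear])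
  ultimately show "\<rho> g *v x \<in> span (\<Union>\<W>)" by blast
qed

lemma subrep_isotypic_component: "subrep G \<phi> (isotypic_component G \<phi> U)"
  unfolding isotypic_component_def by (rule subrep_span_Union) auto

lemma subrep_eigenspace:
  assumes "equivariant ((*v) M)"
  shows "subrep G \<phi> (mat_eigenspace M c)"
  unfolding subrep_def mat_eigenspace_def
proof (intro conjI ballI)
  show "subspace {v. M *v v = c *\<^sub>R v}"
    unfolding subspace_def
    by (auto simp: matrix_vector_right_distrib matrix_vector_mult_scaleR scaleR_add_right)
  show "\<rho> g *v x \<in> {v. M *v v = c *\<^sub>R v}" if "g \<in> carrier G" "x \<in> {v. M *v v = c *\<^sub>R v}" for g x
    using assms that by (simp add: equivariant_def matrix_vector_mult_scaleR)
qed

lemma equivariant_orthogonal_projection: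
  assumes W: "subrep G \<phi> W"
  shows "equivariant (orthogonal_projection W)"
  unfolding equivariant_def
proof (intro ballI allI)
  fix g x assume g: "g \<in> carrier G"
  show "orthogonal_projection W (\<rho> g *v x) = \<rho> g *v orthogonal_projection W x"
    using W subrep_orthogonal_comp[OF W] g
    by (intro orthogonal_projection_commute) (auto simp: subrep_def)
qed

lemma equivariant_projection_matrix:
  assumes W: "subrep G \<phi> W"
  obtains D where "transpose D = D" "equivariant ((*v) D)"
    "\<And>x. x \<in> W \<Longrightarrow> D *v x = x" "\<And>x. x \<in> W\<^sup>\<bottom> \<Longrightarrow> D *v x = 0"
proof -
  have sW: "subspace W"
    using W by (simp add: subrep_def)
  define D where "D = matrix (orthogonal_projection W)"
  have D: "D *v x = orthogonal_projection W x" for x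
    using fun_cong[OF matrix_vector_mul(2)[OF linear_orthogonal_projection[OF sW]]]
    by (simp add: D_def)
  show thesis
  proof (rule that[of D])
    show "transpose D = D"
      unfolding D_def by (rule symmetric_matrix_orthogonal_projection[OF sW])
    show "equivariant ((*v) D)"
      using equivariant_orthogonal_projection[OF W] by (simp add: equivariant_def D)
  qed (simp_all add: D sW orthogonal_projection_id orthogonal_projection_zero)
qed

lemma ex_irreducible_subrep:
  assumes "subrep G \<phi> W" "W \<noteq> {0}"
  obtains U where "irreducible_subrep G \<phi> U" "U \<subseteq> W"
proof -
  let ?Q = "\<lambda>U. subrep G \<phi> U \<and> U \<noteq> {0} \<and> U \<subseteq> W"
  obtain U where U: "?Q U" and min: "\<And>U'. ?Q U' \<Longrightarrow> dim U \<le> dim U'"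
    using ex_has_least_nat[of ?Q W dim] assms by blast
  have "irreducible_subrep G \<phi> U"
    unfolding irreducible_subrep_def
  proof (intro conjI allI impI)
    fix U' assume U': "subrep G \<phi> U' \<and> U' \<subseteq> U"
    show "U' = {0} \<or> U' = U"
    proof (cases "U' = {0}")
      case False
      then have "dim U \<le> dim U'"
        using U U' by (intro min) auto
      then have "U' = U"
        using U U' by (intro subspace_dim_equal) (auto simp: subrep_def)
      then show ?thesis by simp
    qed simp
  qed (use U in auto)
  then show ?thesis
    using U that by blast
qed

lemma irreducible_subrep_nonzero:
  assumes "irreducible_subrep G \<phi> U"
  obtains u where "u \<in> U" "u \<noteq> 0"
  using assms by (auto simp: irreducible_subrep_def subrep_def dest: subspace_0)

lemma iso_subrep_refl: "iso_subrep G \<phi> W W"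
  unfolding iso_subrep_def by (rule exI[of _ id]) (simp add: linear_id)

lemma iso_subrep_trans:
  assumes "iso_subrep G \<phi> U V" "iso_subrep G \<phi> V W"
  shows "iso_subrep G \<phi> U W"
proof -
  obtain f where f: "linear f" "bij_betw f U V" "\<forall>g\<in>carrier G. \<forall>x\<in>U. f (\<rho> g *v x) = \<rho> g *v f x"
    using assms(1) unfolding iso_subrep_def by blast
  obtain h where h: "linear h" "bij_betw h V W" "\<forall>g\<in>carrier G. \<forall>x\<in>V. h (\<rho> g *v x) = \<rho> g *v h x"
    using assms(2) unfolding iso_subrep_def by blast
  have "\<forall>g\<in>carrier G. \<forall>x\<in>U. (h \<circ> f) (\<rho> g *v x) = \<rho> g *v (h \<circ> f) x"
    using f h by (auto simp: bij_betw_def)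
  then show ?thesis
    unfolding iso_subrep_def using f h by (metis linear_compose bij_betw_trans)
qed

lemma iso_subrep_sym:
  assumes V: "subrep G \<phi> V" and "iso_subrep G \<phi> V W"
  shows "iso_subrep G \<phi> W V"
proof -
  obtain f where f: "linear f" "bij_betw f V W" "\<forall>g\<in>carrier G. \<forall>x\<in>V. f (\<rho> g *v x) = \<rho> g *v f x"
    using assms(2) unfolding iso_subrep_def by blast
  have span: "span V = V"
    using V by (simp add: subrep_def)
  obtain h where h: "linear h" "\<And>x. x \<in> V \<Longrightarrow> h (f x) = x"
    using linear_inj_on_left_inverse[OF f(1), of V] f(2) by (auto simp: span bij_betw_def)
  have fV: "f ` V = W"
    using f(2) by (simp add: bij_betw_def)
  have "bij_betw h W V"
    using h(2) fV by (auto intro!: bij_betw_byWitness[where f' = f])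
  moreover have "h (\<rho> g *v y) = \<rho> g *v h y" if "g \<in> carrier G" "y \<in> W" for g y
  proof -
    obtain x where x: "x \<in> V" "y = f x"
      using \<open>y \<in> W\<close> fV by blast
    have "\<rho> g *v x \<in> V"
      using V \<open>g \<in> carrier G\<close> x by (simp add: subrep_def)
    then show ?thesis
      using x f(3) \<open>g \<in> carrier G\<close> h(2) by metis
  qed
  ultimately show ?thesis
    using h(1) unfolding iso_subrep_def by blast
qed

lemma irreducible_subrep_iso:
  assumes U: "irreducible_subrep G \<phi> U" and W: "subrep G \<phi> W" and WU: "iso_subrep G \<phi> W U"
  shows "irreducible_subrep G \<phi> W"
proof -
  obtain f where f: "linear f" "bij_betw f W U" "\<forall>g\<in>carrier G. \<forall>x\<in>W. f (\<rho> g *v x) = \<rho> g *v f x"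
    using WU unfolding iso_subrep_def by blast
  have fW: "f ` W = U" and inj: "inj_on f W"
    using f(2) by (auto simp: bij_betw_def)
  have "W \<noteq> {0}"
    using U fW linear_0[OF f(1)] by (auto simp: irreducible_subrep_def)
  moreover have "W' = {0} \<or> W' = W" if W': "subrep G \<phi> W'" "W' \<subseteq> W" for W'
  proof -
    have "subrep G \<phi> (f ` W')"
      using W' f by (intro subrep_image) auto
    moreover have "f ` W' \<subseteq> U"
      using W' fW by auto
    ultimately have "f ` W' = f ` {0} \<or> f ` W' = f ` W"
      using U fW linear_0[OF f(1)] by (auto simp: irreducible_subrep_def)
    moreover have "{0} \<subseteq> W"
      using W by (simp add: subrep_def subspace_0)
    ultimately show ?thesis
      using inj_on_image_eq_iff[OF inj W'(2)] by (metis order_refl)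
  qed
  ultimately show ?thesis
    using W unfolding irreducible_subrep_def by blast
qed

lemma schur:
  assumes W: "irreducible_subrep G \<phi> W" and f: "linear f" "equivariant f"
  shows "f ` W = {0} \<or> iso_subrep G \<phi> W (f ` W)"
proof -
  have sW: "subspace W"
    using W by (simp add: irreducible_subrep_def subrep_def)
  have "subrep G \<phi> ({x. f x = 0} \<inter> W)"
    using W f unfolding subrep_def irreducible_subrep_def equivariant_def
    by (auto simp: subspace_inter linear_subspace_kernel)
  then have "{x. f x = 0} \<inter> W = {0} \<or> {x. f x = 0} \<inter> W = W"
    using W by (auto simp: irreducible_subrep_def)
  then show ?thesis
  proof
    assume "{x. f x = 0} \<inter> W = {0}"
    then have "inj_on f W"
      using linear_inj_on_iff_eq_0[OF f(1) sW] by blast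
    then show ?thesis
      using f unfolding iso_subrep_def equivariant_def by (auto intro: inj_on_imp_bij_betw)
  next
    assume "{x. f x = 0} \<inter> W = W"
    then have "f ` W = {0}"
      using subspace_0[OF sW] by force
    then show ?thesis ..
  qed
qed

lemma subset_isotypic_component: "subrep G \<phi> U \<Longrightarrow> U \<subseteq> isotypic_component G \<phi> U"
  unfolding isotypic_component_def using iso_subrep_refl by (blast intro: span_base)

lemma isotypic_component_cong:
  assumes "subrep G \<phi> U" "iso_subrep G \<phi> U V"
  shows "isotypic_component G \<phi> U = isotypic_component G \<phi> V"
proof -
  have "iso_subrep G \<phi> W U \<longleftrightarrow> iso_subrep G \<phi> W V" for W
    using assms iso_subrep_sym iso_subrep_trans by blast
  then show ?thesis
    unfolding isotypic_component_def by simp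
qed

lemma isotypic_component_invariant:
  assumes U: "irreducible_subrep G \<phi> U" and f: "linear f" "equivariant f"
    and x: "x \<in> isotypic_component G \<phi> U"
  shows "f x \<in> isotypic_component G \<phi> U"
proof -
  let ?\<W> = "{W. subrep G \<phi> W \<and> iso_subrep G \<phi> W U}"
  have "f ` W \<subseteq> isotypic_component G \<phi> U" if W: "W \<in> ?\<W>" for W
  proof -
    have irr: "irreducible_subrep G \<phi> W"
      using irreducible_subrep_iso U W by blast
    consider "f ` W = {0}" | "iso_subrep G \<phi> W (f ` W)"
      using schur[OF irr f] by blast
    then show ?thesis
    proof cases
      case 1
      then show ?thesis
        using subrep_isotypic_component by (simp add: subrep_def subspace_0)
    next
      case 2
      then have "iso_subrep G \<phi> (f ` W) U"
        using W iso_subrep_sym iso_subrep_trans by blast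
      moreover have "subrep G \<phi> (f ` W)"
        using W f by (intro subrep_image) (auto simp: equivariant_def)
      ultimately show ?thesis
        unfolding isotypic_component_def by (blast intro: span_base)
    qed
  qed
  then have "span (f ` \<Union>?\<W>) \<subseteq> isotypic_component G \<phi> U"
    using subrep_isotypic_component[of U] by (intro span_minimal) (auto simp: subrep_def)
  moreover have "f x \<in> f ` span (\<Union>?\<W>)"
    using x unfolding isotypic_component_def by blast
  ultimately show ?thesis
    unfolding linear_span_image[OF f(1)] by blast
qed

lemma irreducible_subreps_orthogonal:
  assumes V: "irreducible_subrep G \<phi> V" and W: "irreducible_subrep G \<phi> W"
    and VW: "\<not> iso_subrep G \<phi> V W" and x: "x \<in> V" and y: "y \<in> W"
  shows "orthogonal x y"
proof -
  let ?p = "orthogonal_projection W"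
  have sW: "subspace W" and rW: "subrep G \<phi> W"
    using W by (auto simp: irreducible_subrep_def subrep_def)
  have "?p ` V = {0}"
  proof (rule ccontr)
    assume "?p ` V \<noteq> {0}"
    moreover have "subrep G \<phi> (?p ` V)"
      using V equivariant_orthogonal_projection[OF rW] linear_orthogonal_projection[OF sW]
      by (intro subrep_image) (auto simp: irreducible_subrep_def equivariant_def)
    moreover have "?p ` V \<subseteq> W"
      using orthogonal_projection(1)[OF sW] by blast
    ultimately have "?p ` V = W"
      using W unfolding irreducible_subrep_def by blast
    moreover have "?p ` V = {0} \<or> iso_subrep G \<phi> V (?p ` V)"
      using V linear_orthogonal_projection[OF sW] equivariant_orthogonal_projection[OF rW]
      by (rule schur)
    ultimately show False
      using VW \<open>?p ` V \<noteq> {0}\<close> by simp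
  qed
  then have "?p x = 0"
    using x by blast
  then have "x \<in> W\<^sup>\<bottom>"
    using orthogonal_projection(2)[OF sW, of x] by simp
  then show ?thesis
    using y by (auto simp: orthogonal_comp_def orthogonal_commute)
qed

lemma isotypic_components_orthogonal:
  assumes U: "irreducible_subrep G \<phi> U" and V: "irreducible_subrep G \<phi> V"
    and UV: "\<not> iso_subrep G \<phi> U V"
    and x: "x \<in> isotypic_component G \<phi> U" and y: "y \<in> isotypic_component G \<phi> V"
  shows "orthogonal x y"
proof -
  have "orthogonal a b"
    if a: "a \<in> U'" "subrep G \<phi> U'" "iso_subrep G \<phi> U' U"
    and b: "b \<in> V'" "subrep G \<phi> V'" "iso_subrep G \<phi> V' V" for a b U' V'
  proof (rule irreducible_subreps_orthogonal)
    show "irreducible_subrep G \<phi> U'" "irreducible_subrep G \<phi> V'"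
      using irreducible_subrep_iso U V a b by blast+
    show "\<not> iso_subrep G \<phi> U' V'"
      using UV iso_subrep_trans[OF iso_subrep_trans[OF iso_subrep_sym[OF a(2,3)]] b(3)] by blast
  qed (use a b in auto)
  then have "orthogonal a y" if "a \<in> \<Union>{W. subrep G \<phi> W \<and> iso_subrep G \<phi> W U}" for a
    using that y unfolding isotypic_component_def
    by (blast intro: orthogonal_to_span)
  then have "orthogonal y x"
    using x unfolding isotypic_component_def
    by (blast intro: orthogonal_to_span orthogonal_commute[THEN iffD1])
  then show ?thesis
    by (simp add: orthogonal_commute)
qed

lemma finite_isotypic_components:
  "finite {isotypic_component G \<phi> U | U. irreducible_subrep G \<phi> U}"
proof (rule finite_orthogonal_family[where V = id])
  fix C assume "C \<in> {isotypic_component G \<phi> U | U. irreducible_subrep G \<phi> U}"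
  then obtain U where U: "irreducible_subrep G \<phi> U" "C = isotypic_component G \<phi> U"
    by blast
  obtain u where "u \<in> U" "u \<noteq> 0"
    using U(1) by (rule irreducible_subrep_nonzero)
  then show "\<exists>x\<in>id C. x \<noteq> 0"
    using U subset_isotypic_component by (auto simp: irreducible_subrep_def)
next
  fix C D x y
  assume "C \<in> {isotypic_component G \<phi> U | U. irreducible_subrep G \<phi> U}"
    and "D \<in> {isotypic_component G \<phi> U | U. irreducible_subrep G \<phi> U}"
    and CD: "C \<noteq> D" and xy: "x \<in> id C" "y \<in> id D"
  then obtain U V where U: "irreducible_subrep G \<phi> U" "C = isotypic_component G \<phi> U"
    and V: "irreducible_subrep G \<phi> V" "D = isotypic_component G \<phi> V"
    by blast
  have "\<not> iso_subrep G \<phi> U V"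
    using isotypic_component_cong U V CD by (auto simp: irreducible_subrep_def)
  then show "orthogonal x y"
    using isotypic_components_orthogonal U V xy by simp
qed

section \<open>Eigenspaces of equivariant symmetric matrices\<close>

definition separates_isotypic_components :: "real^'n^'n \<Rightarrow> bool" where
  "separates_isotypic_components L \<longleftrightarrow>
     (\<forall>U V. irreducible_subrep G \<phi> U \<longrightarrow> irreducible_subrep G \<phi> V \<longrightarrow>
        isotypic_component G \<phi> U \<noteq> isotypic_component G \<phi> V \<longrightarrow>
        \<not> shares_eigenvalue L (isotypic_component G \<phi> U) (isotypic_component G \<phi> V))"

lemma eigenspace_Int_orthogonal_isotypic_component:
  assumes sep: "separates_isotypic_components L"
    and U: "irreducible_subrep G \<phi> U" "U \<subseteq> mat_eigenspace L c"
    and E: "subrep G \<phi> (mat_eigenspace L c)"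
  shows "mat_eigenspace L c \<inter> (isotypic_component G \<phi> U)\<^sup>\<bottom> = {0}"
proof (rule ccontr)
  define C where "C = isotypic_component G \<phi> U"
  assume "mat_eigenspace L c \<inter> (isotypic_component G \<phi> U)\<^sup>\<bottom> \<noteq> {0}"
  moreover have "subrep G \<phi> (mat_eigenspace L c \<inter> C\<^sup>\<bottom>)"
    unfolding C_def by (intro subrep_Int E subrep_orthogonal_comp subrep_isotypic_component)
  ultimately obtain U' where U': "irreducible_subrep G \<phi> U'" "U' \<subseteq> mat_eigenspace L c \<inter> C\<^sup>\<bottom>"
    unfolding C_def using ex_irreducible_subrep by blast
  obtain u where u: "u \<in> U" "u \<noteq> 0"
    using U(1) by (rule irreducible_subrep_nonzero)
  obtain u' where u': "u' \<in> U'" "u' \<noteq> 0"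
    using U'(1) by (rule irreducible_subrep_nonzero)
  have uC: "u \<in> C" and u'C': "u' \<in> isotypic_component G \<phi> U'"
    using subset_isotypic_component U(1) U'(1) u u' by (auto simp: C_def irreducible_subrep_def)
  have "isotypic_component G \<phi> U' \<noteq> C"
  proof
    assume "isotypic_component G \<phi> U' = C"
    then have "u' \<in> C \<inter> C\<^sup>\<bottom>"
      using u'C' u' U'(2) by blast
    moreover have "subspace C"
      using subrep_isotypic_component by (simp add: C_def subrep_def)
    ultimately show False
      using orthogonal_Int_0 u'(2) by blast
  qed
  moreover have "shares_eigenvalue L C (isotypic_component G \<phi> U')"
    unfolding shares_eigenvalue_def
    using uC u'C' u u' U(2) U'(2) by (auto simp: mat_eigenspace_def intro!: exI[of _ c])
  ultimately show False
    using sep U(1) U'(1) by (auto simp: separates_isotypic_components_def C_def)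
qed

lemma eigenspace_subset_isotypic_component:
  fixes L :: "real^'n^'n"
  assumes sym: "transpose L = L" and eq: "equivariant ((*v) L)"
    and sep: "separates_isotypic_components L" and v: "v \<noteq> 0" "L *v v = c *\<^sub>R v"
  obtains U where "irreducible_subrep G \<phi> U" "mat_eigenspace L c \<subseteq> isotypic_component G \<phi> U"
proof -
  have E: "subrep G \<phi> (mat_eigenspace L c)"
    using eq by (rule subrep_eigenspace)
  moreover have "mat_eigenspace L c \<noteq> {0}"
    using v by (auto simp: mat_eigenspace_def)
  ultimately obtain U where U: "irreducible_subrep G \<phi> U" "U \<subseteq> mat_eigenspace L c"
    by (rule ex_irreducible_subrep)
  have "mat_eigenspace L c \<subseteq> isotypic_component G \<phi> U"
  proof (rule eigenspace_subset_invariant_subspace[OF sym])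
    show "subspace (isotypic_component G \<phi> U)"
      using subrep_isotypic_component by (simp add: subrep_def)
    show "L *v x \<in> isotypic_component G \<phi> U" if "x \<in> isotypic_component G \<phi> U" for x
      using isotypic_component_invariant[OF U(1) _ eq] that by simp
    show "mat_eigenspace L c \<inter> (isotypic_component G \<phi> U)\<^sup>\<bottom> = {0}"
      by (rule eigenspace_Int_orthogonal_isotypic_component[OF sep U E])
  qed
  then show ?thesis
    using that U(1) by blast
qed

end

section \<open>Null sets of the Gaussian Orthogonal Ensemble\<close>

abbreviation lborel_pi :: "('i::finite \<Rightarrow> real) measure" where
  "lborel_pi \<equiv> PiM UNIV (\<lambda>_. lborel)"

abbreviation std_normal_pi :: "('i::finite \<Rightarrow> real) measure" where
  "std_normal_pi \<equiv> PiM UNIV (\<lambda>_. density lborel std_normal_density)"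

lemma product_sigma_finite_lborel: "product_sigma_finite (\<lambda>_. lborel :: real measure)"
  unfolding product_sigma_finite_def using lborel.sigma_finite_measure_axioms by blast

lemma sets_lborel_pi: "sets (lborel_pi :: ('i::finite \<Rightarrow> real) measure) = sets borel"
proof -
  have "sets (lborel_pi :: ('i \<Rightarrow> real) measure) = sets (PiM UNIV (\<lambda>_::'i. borel :: real measure))"
    by (rule sets_PiM_cong) auto
  also have "\<dots> = sets borel"
    by (rule sets_PiM_equal_borel)
  finally show ?thesis .
qed

lemma sets_std_normal_pi: "sets (std_normal_pi :: ('i::finite \<Rightarrow> real) measure) = sets borel"
proof -
  have "sets (std_normal_pi :: ('i \<Rightarrow> real) measure) = sets (lborel_pi :: ('i \<Rightarrow> real) measure)"
    by (rule sets_PiM_cong) auto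
  then show ?thesis
    by (simp add: sets_lborel_pi)
qed

lemma translate_measurable_lborel_pi:
  "(\<lambda>X i. X i + c i) \<in> measurable (lborel_pi :: ('i::finite \<Rightarrow> real) measure) lborel_pi"
  by (rule measurable_PiM_single') (auto simp: space_PiM)

lemma lborel_pi_translation:
  fixes c :: "'i::finite \<Rightarrow> real"
  shows "distr lborel_pi lborel_pi (\<lambda>X i. X i + c i) = lborel_pi"
proof -
  interpret product_sigma_finite "\<lambda>_::'i. lborel :: real measure"
    by (rule product_sigma_finite_lborel)
  show ?thesis
  proof (rule PiM_eqI)
    fix A :: "'i \<Rightarrow> real set" assume A: "\<And>i. i \<in> UNIV \<Longrightarrow> A i \<in> sets lborel"
    have "(\<lambda>X i. X i + c i) -` Pi\<^sub>E UNIV A \<inter> space lborel_pi = Pi\<^sub>E UNIV (\<lambda>i. (+) (c i) -` A i)"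
      by (auto simp: space_PiM PiE_def Pi_def add.commute)
    then have "emeasure (distr lborel_pi lborel_pi (\<lambda>X i. X i + c i)) (Pi\<^sub>E UNIV A) =
       emeasure lborel_pi (Pi\<^sub>E UNIV (\<lambda>i. (+) (c i) -` A i))"
      using A by (simp add: emeasure_distr translate_measurable_lborel_pi sets_PiM_I_finite)
    also have "\<dots> = (\<Prod>i\<in>UNIV. emeasure lborel ((+) (c i) -` A i))"
    proof (rule emeasure_PiM)
      show "(+) (c i) -` A i \<in> sets lborel" for i
        using A by (auto intro: measurable_sets_borel[where M = borel])
    qed simp
    also have "\<dots> = (\<Prod>i\<in>UNIV. emeasure lborel (A i))"
    proof (rule prod.cong)
      fix i
      have "emeasure lborel (A i) = emeasure (distr lborel borel ((+) (c i))) (A i)"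
        by (simp add: lborel_distr_plus)
      also have "\<dots> = emeasure lborel ((+) (c i) -` A i)"
        using A by (subst emeasure_distr) auto
      finally show "emeasure lborel ((+) (c i) -` A i) = emeasure lborel (A i)" by simp
    qed simp
    finally show "emeasure (distr lborel_pi lborel_pi (\<lambda>X i. X i + c i)) (Pi\<^sub>E UNIV A) =
        (\<Prod>i\<in>UNIV. emeasure lborel (A i))" .
  qed simp_all
qed

lemma emeasure_lborel_pi_translation:
  fixes c :: "'i::finite \<Rightarrow> real"
  assumes "B \<in> sets borel"
  shows "emeasure lborel_pi {X. (\<lambda>i. X i + c i) \<in> B} = emeasure lborel_pi B"
proof -
  have "emeasure lborel_pi B = emeasure (distr lborel_pi lborel_pi (\<lambda>X i. X i + c i)) B"
    by (simp add: lborel_pi_translation)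
  also have "\<dots> = emeasure lborel_pi ((\<lambda>X i. X i + c i) -` B \<inter> space lborel_pi)"
    using assms by (intro emeasure_distr translate_measurable_lborel_pi) (simp add: sets_lborel_pi)
  also have "(\<lambda>X i. X i + c i) -` B \<inter> space lborel_pi = {X. (\<lambda>i. X i + c i) \<in> B}"
    by (auto simp: space_PiM)
  finally show ?thesis ..
qed

text \<open>Fubini along the lines in direction \<open>Y\<close>: by translation invariance each slice
  \<open>{X. X + t Y \<in> B}\<close> has the measure of \<open>B\<close>, while for fixed \<open>X\<close> the set of \<open>t\<close> is null.\<close>
lemma null_sets_lborel_pi_countable_lines:
  fixes B :: "('i::finite \<Rightarrow> real) set" and Y :: "'i \<Rightarrow> real"
  assumes B: "B \<in> sets borel" and countable: "\<And>X. countable {t. (\<lambda>i. X i + t * Y i) \<in> B}"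
  shows "B \<in> null_sets lborel_pi"
proof -
  interpret pair_sigma_finite "lborel_pi :: ('i \<Rightarrow> real) measure" "lborel :: real measure"
    using product_sigma_finite_lborel
    by (intro pair_sigma_finite.intro product_sigma_finite.sigma_finite
        lborel.sigma_finite_measure_axioms) simp_all
  let ?f = "\<lambda>X t. indicator B (\<lambda>i. X i + t * Y i) * indicator {0..1::real} t :: ennreal"
  have line: "(\<lambda>(X, t) i. X i + t * Y i) \<in> measurable (lborel_pi \<Otimes>\<^sub>M lborel) lborel_pi"
    by (rule measurable_PiM_single') (auto simp: space_PiM split_beta')
  moreover have "B \<in> sets lborel_pi"
    using B by (simp add: sets_lborel_pi)
  ultimately have f: "case_prod ?f \<in> borel_measurable (lborel_pi \<Otimes>\<^sub>M lborel)"
    by (simp add: split_beta' measurable_compose[OF _ borel_measurable_indicator])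
  have slice: "(\<integral>\<^sup>+ X. ?f X t \<partial>lborel_pi) = emeasure lborel_pi B * indicator {0..1} t" for t
  proof -
    define S where "S = {X. (\<lambda>i. X i + t * Y i) \<in> B}"
    have S: "S \<in> sets lborel_pi"
      using measurable_sets[OF translate_measurable_lborel_pi, of B "\<lambda>i. t * Y i"] B
      by (simp add: S_def sets_lborel_pi space_PiM vimage_def)
    have "(\<integral>\<^sup>+ X. ?f X t \<partial>lborel_pi) = (\<integral>\<^sup>+ X. indicator S X * indicator {0..1} t \<partial>lborel_pi)"
      by (simp add: S_def indicator_def)
    also have "\<dots> = emeasure lborel_pi S * indicator {0..1} t"
      using S by (simp add: nn_integral_multc)
    finally show ?thesis
      using emeasure_lborel_pi_translation[OF B, of "\<lambda>i. t * Y i"] by (simp add: S_def)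
  qed
  have null: "(\<integral>\<^sup>+ t. ?f X t \<partial>lborel) = 0" for X
  proof -
    have "{t. (\<lambda>i. X i + t * Y i) \<in> B} \<in> null_sets lborel"
      using countable by (rule countable_imp_null_set_lborel)
    then have "AE t in lborel. ?f X t = 0"
      by (rule AE_mp[OF AE_not_in]) (auto simp: indicator_def)
    then show ?thesis
      using nn_integral_cong_AE by fastforce
  qed
  have "emeasure lborel_pi B = (\<integral>\<^sup>+ t. emeasure lborel_pi B * indicator {0..1::real} t \<partial>lborel)"
    by (subst nn_integral_cmult_indicator) auto
  also have "\<dots> = (\<integral>\<^sup>+ t. (\<integral>\<^sup>+ X. ?f X t \<partial>lborel_pi) \<partial>lborel)"
    by (simp add: slice)
  also have "\<dots> = (\<integral>\<^sup>+ X. (\<integral>\<^sup>+ t. ?f X t \<partial>lborel) \<partial>lborel_pi)"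
    by (rule Fubini'[OF f])
  also have "\<dots> = 0"
    by (simp add: null)
  finally show ?thesis
    using B by (simp add: null_sets_def sets_lborel_pi)
qed

lemma std_normal_pi_density:
  "(std_normal_pi :: ('i::finite \<Rightarrow> real) measure) = density lborel_pi (\<lambda>X. \<Prod>i\<in>UNIV. ennreal (std_normal_density (X i)))"
  (is "_ = density lborel_pi ?\<rho>")
proof -
  interpret N: product_sigma_finite "\<lambda>_::'i. density lborel std_normal_density"
    by (simp add: product_sigma_finite_def prob_space_imp_sigma_finite prob_space_normal_density)
  interpret L: product_sigma_finite "\<lambda>_::'i. lborel :: real measure"
    by (rule product_sigma_finite_lborel)
  have \<rho>: "?\<rho> \<in> borel_measurable lborel_pi"
    by measurable
  have "density lborel_pi ?\<rho> = std_normal_pi"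
  proof (rule N.PiM_eqI)
    fix A :: "'i \<Rightarrow> real set"
    assume "\<And>i. i \<in> UNIV \<Longrightarrow> A i \<in> sets (density lborel std_normal_density)"
    then have A: "\<And>i. A i \<in> sets borel" by simp
    then have PA: "Pi\<^sub>E UNIV A \<in> sets lborel_pi"
      by (intro sets_PiM_I_finite) auto
    have "emeasure (density lborel_pi ?\<rho>) (Pi\<^sub>E UNIV A) =
        (\<integral>\<^sup>+ X. ?\<rho> X * indicator (Pi\<^sub>E UNIV A) X \<partial>lborel_pi)"
      by (rule emeasure_density[OF \<rho> PA])
    also have "\<dots> = (\<integral>\<^sup>+ X. (\<Prod>i\<in>UNIV. ennreal (std_normal_density (X i)) * indicator (A i) (X i)) \<partial>lborel_pi)"
    proof (rule nn_integral_cong)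
      fix X :: "'i \<Rightarrow> real"
      have "indicator (Pi\<^sub>E UNIV A) X = (\<Prod>i\<in>UNIV. indicator (A i) (X i) :: ennreal)"
        by (auto simp: indicator_def PiE_def Pi_def)
      then show "?\<rho> X * indicator (Pi\<^sub>E UNIV A) X =
          (\<Prod>i\<in>UNIV. ennreal (std_normal_density (X i)) * indicator (A i) (X i))"
        by (simp add: prod.distrib)
    qed
    also have "\<dots> = (\<Prod>i\<in>UNIV. (\<integral>\<^sup>+ x. ennreal (std_normal_density x) * indicator (A i) x \<partial>lborel))"
      using A by (intro L.product_nn_integral_prod) auto
    also have "\<dots> = (\<Prod>i\<in>UNIV. emeasure (density lborel std_normal_density) (A i))"
      using A by (intro prod.cong refl) (simp add: emeasure_density)
    finally show "emeasure (density lborel_pi ?\<rho>) (Pi\<^sub>E UNIV A) =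
        (\<Prod>i\<in>UNIV. emeasure (density lborel std_normal_density) (A i))" .
  qed (simp_all only: sets_density sets_lborel_pi sets_std_normal_pi, simp)
  then show ?thesis by simp
qed

lemma null_sets_std_normal_pi:
  assumes "B \<in> null_sets (lborel_pi :: ('i::finite \<Rightarrow> real) measure)"
  shows "B \<in> null_sets (std_normal_pi :: ('i \<Rightarrow> real) measure)"
proof -
  have "AE X in lborel_pi. X \<in> B \<longrightarrow> (\<Prod>i\<in>UNIV. ennreal (std_normal_density (X i))) = 0"
    using AE_not_in[OF assms] by eventually_elim auto
  moreover have "(\<lambda>X. \<Prod>i\<in>UNIV. ennreal (std_normal_density (X i))) \<in> borel_measurable lborel_pi"
    by measurable
  ultimately show ?thesis
    using assms unfolding std_normal_pi_density by (auto simp add: null_sets_density_iff)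
qed

definition goe_matrix :: "('n::finite \<times> 'n \<Rightarrow> real) \<Rightarrow> real^'n^'n" where
  "goe_matrix X = (\<chi> i j. (X (i, j) + X (j, i)) / sqrt 2)"

lemma GOE_eq_distr: "GOE = distr std_normal_pi borel goe_matrix"
  unfolding GOE_def goe_matrix_def ..

lemma borel_measurable_goe_matrix: "goe_matrix \<in> borel_measurable borel"
proof -
  have "continuous_on UNIV goe_matrix"
    unfolding goe_matrix_def by (intro continuous_intros continuous_on_product_coordinates) simp
  then show ?thesis
    by (rule borel_measurable_continuous_onI)
qed

lemma measurable_goe_matrix: "goe_matrix \<in> measurable std_normal_pi borel"
  using borel_measurable_goe_matrix by (simp add: measurable_cong_sets[OF sets_std_normal_pi refl])

lemma symmetric_goe_matrix: "transpose (goe_matrix X) = goe_matrix X"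
  by (simp add: goe_matrix_def transpose_def vec_eq_iff add.commute)

lemma AE_GOE_symmetric: "AE A in GOE. transpose A = A"
proof (rule AE_I')
  have "{A :: real^'n^'n. transpose A \<noteq> A} \<in> sets borel"
    unfolding transpose_def by (intro borel_open open_Collect_neq continuous_intros)
  then show "{A :: real^'n^'n. transpose A \<noteq> A} \<in> null_sets GOE"
    by (simp add: GOE_eq_distr null_sets_distr_iff[OF measurable_goe_matrix]
        symmetric_goe_matrix)
qed auto

lemma null_sets_GOE_countable_lines:
  fixes K :: "(real^'n::finite^'n) set" and D :: "real^'n^'n"
  assumes K: "K \<in> sets borel" and D: "transpose D = D"
    and countable: "\<And>A. transpose A = A \<Longrightarrow> countable {t. A + t *\<^sub>R D \<in> K}"
  shows "K \<in> null_sets GOE"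
proof -
  define Y where "Y = (\<lambda>(i, j). D $ i $ j / sqrt 2)"
  have "goe_matrix Y = D"
  proof -
    have "D $ j $ i = D $ i $ j" for i j
      using arg_cong[OF D, of "\<lambda>M. M $ i $ j"] by (simp add: transpose_def)
    moreover have "(a / sqrt 2 + a / sqrt 2) / sqrt 2 = a" for a :: real
    proof -
      have "(a / sqrt 2 + a / sqrt 2) / sqrt 2 = (2 * a) / (sqrt 2 * sqrt 2)"
        by (simp add: field_simps)
      then show ?thesis by simp
    qed
    ultimately show ?thesis
      by (simp add: goe_matrix_def Y_def vec_eq_iff)
  qed
  moreover have "goe_matrix (\<lambda>k. X k + t * Y k) = goe_matrix X + t *\<^sub>R goe_matrix Y" for X t
    by (simp add: goe_matrix_def vec_eq_iff add_divide_distrib algebra_simps)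
  ultimately have line: "goe_matrix (\<lambda>k. X k + t * Y k) = goe_matrix X + t *\<^sub>R D" for X t
    by simp
  have B: "goe_matrix -` K \<in> sets borel"
    using borel_measurable_goe_matrix K by (rule measurable_sets_borel)
  have "goe_matrix -` K \<in> null_sets lborel_pi"
    using B by (rule null_sets_lborel_pi_countable_lines[where Y = Y])
      (simp add: line countable symmetric_goe_matrix)
  then have "goe_matrix -` K \<in> null_sets std_normal_pi"
    by (rule null_sets_std_normal_pi)
  then show ?thesis
    using K by (simp add: GOE_eq_distr null_sets_distr_iff[OF measurable_goe_matrix] space_PiM)
qed

lemma continuous_on_matrix_vector_mult [continuous_intros]:
  fixes f :: "'a::topological_space \<Rightarrow> real^'n::finite^'m::finite"
  assumes "continuous_on S f" "continuous_on S g"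
  shows "continuous_on S (\<lambda>p. f p *v g p)"
  unfolding matrix_vector_mult_def using assms by (intro continuous_intros)

lemma shares_eigenvalue_unit:
  assumes V: "subspace V" and W: "subspace W"
  shows "shares_eigenvalue L V W \<longleftrightarrow> (\<exists>v w. v \<in> V \<and> w \<in> W \<and> norm v = 1 \<and> norm w = 1 \<and>
     L *v v = (v \<bullet> (L *v v)) *\<^sub>R v \<and> L *v w = (v \<bullet> (L *v v)) *\<^sub>R w)"
proof
  assume "shares_eigenvalue L V W"
  then obtain c v w where v: "v \<in> V" "v \<noteq> 0" "L *v v = c *\<^sub>R v"
    and w: "w \<in> W" "w \<noteq> 0" "L *v w = c *\<^sub>R w"
    unfolding shares_eigenvalue_def by blast
  define v' where "v' = (1 / norm v) *\<^sub>R v"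
  define w' where "w' = (1 / norm w) *\<^sub>R w"
  have unit: "norm v' = 1" "norm w' = 1"
    using v w by (simp_all add: v'_def w'_def)
  have Lv': "L *v v' = c *\<^sub>R v'" and Lw': "L *v w' = c *\<^sub>R w'"
    using v w by (simp_all add: v'_def w'_def matrix_vector_mult_scaleR)
  moreover have "v' \<bullet> (L *v v') = c"
    using Lv' unit by (simp add: dot_square_norm)
  moreover have "v' \<in> V" "w' \<in> W"
    using v w V W by (simp_all add: v'_def w'_def subspace_scale)
  ultimately show "\<exists>v w. v \<in> V \<and> w \<in> W \<and> norm v = 1 \<and> norm w = 1 \<and>
     L *v v = (v \<bullet> (L *v v)) *\<^sub>R v \<and> L *v w = (v \<bullet> (L *v v)) *\<^sub>R w"
    using unit by metis
next
  assume "\<exists>v w. v \<in> V \<and> w \<in> W \<and> norm v = 1 \<and> norm w = 1 \<and>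
     L *v v = (v \<bullet> (L *v v)) *\<^sub>R v \<and> L *v w = (v \<bullet> (L *v v)) *\<^sub>R w"
  then show "shares_eigenvalue L V W"
    unfolding shares_eigenvalue_def by (metis norm_zero zero_neq_one)
qed

text \<open>Normalising the eigenvectors makes the witnesses range over a compact set.\<close>
lemma closed_shares_eigenvalue:
  fixes V W :: "(real^'n::finite) set"
  assumes V: "subspace V" and W: "subspace W"
  shows "closed {L. shares_eigenvalue L V W}"
proof -
  define T :: "(((real^'n) \<times> (real^'n)) \<times> (real^'n^'n)) set" where
    "T = {p. fst (fst p) \<in> V \<and> snd (fst p) \<in> W \<and>
       snd p *v fst (fst p) = (fst (fst p) \<bullet> (snd p *v fst (fst p))) *\<^sub>R fst (fst p) \<and>
       snd p *v snd (fst p) = (fst (fst p) \<bullet> (snd p *v fst (fst p))) *\<^sub>R snd (fst p)}"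
  have "closed {p :: ((real^'n) \<times> (real^'n)) \<times> (real^'n^'n). fst (fst p) \<in> V}"
    using continuous_closed_vimage[OF closed_subspace[OF V], of "\<lambda>p. fst (fst p)"]
    by (simp add: vimage_def continuous_intros)
  moreover have "closed {p :: ((real^'n) \<times> (real^'n)) \<times> (real^'n^'n). snd (fst p) \<in> W}"
    using continuous_closed_vimage[OF closed_subspace[OF W], of "\<lambda>p. snd (fst p)"]
    by (simp add: vimage_def continuous_intros)
  ultimately have "closed T"
    unfolding T_def by (intro closed_Collect_conj closed_Collect_eq continuous_intros) auto
  then have "closed {L. \<exists>vw. vw \<in> sphere 0 1 \<times> sphere 0 1 \<and> (vw, L) \<in> T}"
    by (rule closed_compact_projection[OF compact_Times[OF compact_sphere compact_sphere]])
  moreover have "{L. shares_eigenvalue L V W} =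
      {L. \<exists>vw. vw \<in> sphere 0 1 \<times> sphere 0 1 \<and> (vw, L) \<in> T}"
    by (auto simp: shares_eigenvalue_unit[OF V W] T_def)
  ultimately show ?thesis
    by simp
qed

context perm_rep
begin

lemma null_sets_shares_eigenvalue:
  assumes fin: "finite (carrier G)"
    and U: "irreducible_subrep G \<phi> U" and V: "irreducible_subrep G \<phi> V"
    and UV: "isotypic_component G \<phi> U \<noteq> isotypic_component G \<phi> V"
  shows "{A. shares_eigenvalue (reynolds G \<phi> A) (isotypic_component G \<phi> U) (isotypic_component G \<phi> V)}
    \<in> null_sets GOE"
proof -
  define C1 where "C1 = isotypic_component G \<phi> U"
  define C2 where "C2 = isotypic_component G \<phi> V"
  define K where "K = {A. shares_eigenvalue (reynolds G \<phi> A) C1 C2}"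
  have "\<not> iso_subrep G \<phi> U V"
    using isotypic_component_cong U UV by (auto simp: irreducible_subrep_def)
  then have C21: "C2 \<subseteq> C1\<^sup>\<bottom>"
    using isotypic_components_orthogonal[OF U V] by (auto simp: C1_def C2_def orthogonal_comp_def)
  obtain D where D: "transpose D = D" "equivariant ((*v) D)"
    "\<And>x. x \<in> C1 \<Longrightarrow> D *v x = x" "\<And>x. x \<in> C1\<^sup>\<bottom> \<Longrightarrow> D *v x = 0"
    using equivariant_projection_matrix[OF subrep_isotypic_component[of U]] unfolding C1_def
    by blast
  have "reynolds G \<phi> (A + t *\<^sub>R D) = reynolds G \<phi> A + t *\<^sub>R D" for A t
    using linear_reynolds[of G \<phi>] reynolds_equivariant_id[OF fin D(2)]
    by (simp add: linear_add linear_scale)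
  then have "{t. A + t *\<^sub>R D \<in> K} = {t. shares_eigenvalue (reynolds G \<phi> A + t *\<^sub>R D) C1 C2}" for A
    by (simp add: K_def)
  moreover have "finite {t. shares_eigenvalue (reynolds G \<phi> A + t *\<^sub>R D) C1 C2}"
    if "transpose A = A" for A
    using C21 by (intro finite_shares_eigenvalue_line symmetric_reynolds that D) auto
  moreover have "subspace C1" "subspace C2"
    using subrep_isotypic_component by (simp_all add: C1_def C2_def subrep_def)
  then have "closed (reynolds G \<phi> -` {L. shares_eigenvalue L C1 C2})"
    using linear_reynolds[of G \<phi>]
    by (intro continuous_closed_vimage closed_shares_eigenvalue)
      (simp_all add: linear_continuous_at linear_conv_bounded_linear)
  then have "K \<in> sets borel"
    by (simp add: K_def vimage_def borel_closed)
  ultimately have "K \<in> null_sets GOE"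
    by (intro null_sets_GOE_countable_lines[OF _ D(1)]) (auto intro: countable_finite)
  then show ?thesis
    by (simp add: K_def C1_def C2_def)
qed

lemma AE_GOE_separates_isotypic_components:
  assumes "finite (carrier G)"
  shows "AE A in GOE. separates_isotypic_components (reynolds G \<phi> A)"
proof -
  let ?C = "{isotypic_component G \<phi> U | U. irreducible_subrep G \<phi> U}"
  have "AE A in GOE. \<forall>C1\<in>?C. \<forall>C2\<in>?C. C1 \<noteq> C2 \<longrightarrow> \<not> shares_eigenvalue (reynolds G \<phi> A) C1 C2"
  proof (intro AE_finite_allI finite_isotypic_components)
    fix C1 C2 assume "C1 \<in> ?C" "C2 \<in> ?C"
    then show "AE A in GOE. C1 \<noteq> C2 \<longrightarrow> \<not> shares_eigenvalue (reynolds G \<phi> A) C1 C2"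
      using null_sets_shares_eigenvalue[OF assms] by (auto intro: AE_I')
  qed
  then show ?thesis
    unfolding separates_isotypic_components_def by eventually_elim blast
qed

end

theorem proposition3:
  fixes G :: "('g, 'b) monoid_scheme" and \<phi> :: "'g \<Rightarrow> 'n::finite \<Rightarrow> 'n"
  assumes "group_action G UNIV \<phi>"
    and "finite (carrier G)"
  shows "AE A in GOE. \<forall>c. (\<exists>v. v \<noteq> 0 \<and> reynolds G \<phi> A *v v = c *\<^sub>R v) \<longrightarrow>
           (\<exists>U. irreducible_subrep G \<phi> U \<and>
                mat_eigenspace (reynolds G \<phi> A) c \<subseteq> isotypic_component G \<phi> U)"
proof -
  interpret perm_rep G \<phi>
    unfolding perm_rep_def by (rule assms(1))
  from AE_GOE_symmetric AE_GOE_separates_isotypic_components[OF assms(2)] show ?thesis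
  proof eventually_elim
    case (elim A)
    show ?case
    proof (intro allI impI)
      fix c assume "\<exists>v. v \<noteq> 0 \<and> reynolds G \<phi> A *v v = c *\<^sub>R v"
      then obtain v where "v \<noteq> 0" "reynolds G \<phi> A *v v = c *\<^sub>R v"
        by blast
      then obtain U where "irreducible_subrep G \<phi> U"
          "mat_eigenspace (reynolds G \<phi> A) c \<subseteq> isotypic_component G \<phi> U"
        by (rule eigenspace_subset_isotypic_component[OF symmetric_reynolds[OF elim(1)]
              reynolds_equivariant elim(2)])
      then show "\<exists>U. irreducible_subrep G \<phi> U \<and>
          mat_eigenspace (reynolds G \<phi> A) c \<subseteq> isotypic_component G \<phi> U"
        by blast
    qed
  qed
qed

end
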